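(* Let $x=(x_1,\dots,x_n)$ be a stochastic vector ($x_k\ge0$, $\sum_k x_k=1$) and let $y=x_1$. Then \[ \prod_{k=1}^n(1-x_k)^{1-x_k}\ \ge\ \frac{(1-y)^{1-y}}{e^{1-y}}. \]
   Context: Convention: $0^0=1$. *)

theory Defs
  imports Complex_Main
begin

definition rpow :: "real \<Rightarrow> real \<Rightarrow> real" where
  "rpow a b = (if a = 0 then (if b = 0 then 1 else 0) else a powr b)"

end

theory Submission
  imports Defs
begin

text \<open>
  Write u = 1 - t.  The elementary inequality ln u \<ge> 1 - 1/u gives
  u ln u \<ge> u - 1 = -t, i.e. the single-factor bound  (1-t)^(1-t) \<ge> e^(-t)
  for every t \<le> 1 (at t = 1 both conventions 0^0 = 1 and e^(-1) \<le> 1 agree).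
  Multiplying these bounds over a finite index set turns the product of the
  factors into exp of minus the sum of the t's.  For a stochastic vector every
  entry lies in [0,1]; splitting off the first factor, the remaining entries sum
  to 1 - x_1, so the remaining product is at least e^(-(1-x_1)), which is the claim.
\<close>

lemma rpow_nonneg: "0 \<le> rpow a b"
  by (simp add: rpow_def)

lemma exp_neg_le_rpow:
  fixes t :: real
  assumes "t \<le> 1"
  shows "exp (- t) \<le> rpow (1 - t) (1 - t)"
proof (cases "t = 1")
  case True
  then show ?thesis by (simp add: rpow_def)
next
  case False
  define u where "u = 1 - t"
  have u_pos: "0 < u" using assms False by (simp add: u_def)
  have "ln (1/u) \<le> 1/u - 1" using u_pos by (intro ln_le_minus_one) auto
  hence "- ln u \<le> 1/u - 1" using u_pos by (simp add: ln_div)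
  hence "u * (- ln u) \<le> u * (1/u - 1)" using u_pos by (intro mult_left_mono) auto
  hence "- t \<le> u * ln u" using u_pos by (simp add: u_def algebra_simps)
  hence "exp (- t) \<le> exp (u * ln u)" by simp
  also have "\<dots> = rpow u u" using u_pos by (simp add: rpow_def powr_def)
  finally show ?thesis by (simp add: u_def)
qed

lemma exp_neg_sum_le_prod_rpow:
  fixes t :: "'a \<Rightarrow> real"
  assumes "finite A" "\<And>k. k \<in> A \<Longrightarrow> t k \<le> 1"
  shows "exp (- (\<Sum>k\<in>A. t k)) \<le> (\<Prod>k\<in>A. rpow (1 - t k) (1 - t k))"
proof -
  have "exp (- (\<Sum>k\<in>A. t k)) = (\<Prod>k\<in>A. exp (- t k))"
    using exp_sum[OF assms(1), of "\<lambda>k. - t k"] by (simp add: sum_negf)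
  also have "\<dots> \<le> (\<Prod>k\<in>A. rpow (1 - t k) (1 - t k))"
    by (rule prod_mono) (use assms exp_neg_le_rpow in auto)
  finally show ?thesis .
qed

lemma entry_le_one:
  fixes x :: "'a \<Rightarrow> real"
  assumes "finite A" "\<And>k. k \<in> A \<Longrightarrow> 0 \<le> x k" "(\<Sum>k\<in>A. x k) = 1" "j \<in> A"
  shows "x j \<le> 1"
  using member_le_sum[of j A x] assms by auto

theorem lemma5p5:
  fixes x :: "nat \<Rightarrow> real" and n :: nat
  assumes "n \<ge> 1"
    and "\<And>k. k \<in> {1..n} \<Longrightarrow> x k \<ge> 0"
    and "(\<Sum>k=1..n. x k) = 1"
  shows "(\<Prod>k=1..n. rpow (1 - x k) (1 - x k)) \<ge> rpow (1 - x 1) (1 - x 1) / exp (1 - x 1)"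
proof -
  let ?f = "\<lambda>k. rpow (1 - x k) (1 - x k)"
  have split: "{1..n} = insert 1 {2..n}" using assms(1) by auto
  have rest_sum: "(\<Sum>k=2..n. x k) = 1 - x 1"
    using assms(3) unfolding split by (subst (asm) sum.insert) auto
  have "exp (- (1 - x 1)) \<le> (\<Prod>k=2..n. ?f k)"
    using exp_neg_sum_le_prod_rpow[of "{2..n}" x] entry_le_one[OF _ assms(2,3)] rest_sum
    by (auto simp: split)
  hence "?f 1 * exp (- (1 - x 1)) \<le> ?f 1 * (\<Prod>k=2..n. ?f k)"
    by (rule mult_left_mono) (rule rpow_nonneg)
  also have "\<dots> = (\<Prod>k=1..n. ?f k)"
    unfolding split by (subst prod.insert) auto
  finally show ?thesis
    using exp_minus[of "1 - x 1"] by (simp add: divide_inverse)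
qed

end
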